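(* Let $H(u,v,z,t)=\sum_w u^{\mathrm{asc}(w)}v^{\mathrm{last}(w)}z^{\mathrm{zeros}(w)}t^{\mathrm{length}(w)}$, summed over all nonempty ascent sequences $w$. Then $$(v-1-tv(1-u))\,H(u,v,z,t)=tz(v-1)+t(z(v-1)-v)\,H(u,1,z,t)+tuv^2\,H(uv,1,z,t).$$
   Context: An ascent sequence of length $n$ is a sequence $(x_1,\dots,x_n)$ of nonnegative integers with $x_1=0$ and $x_i\in[0,1+\mathrm{asc}(x_1,\dots,x_{i-1})]$ for $2\le i\le n$, where $\mathrm{asc}(y_1,\dots,y_k)=|\{1\le j<k: y_j<y_{j+1}\}|$. For an ascent sequence $w$: $\mathrm{length}(w)$ is its number of entries, $\mathrm{asc}(w)$ its number of ascents, $\mathrm{last}(w)$ its rightmost entry, $\mathrm{zeros}(w)$ its number of entries equal to 0. $H$ is a formal power series in $t$ with polynomial coefficients in $u,v,z$; $H(u,1,z,t)$ and $H(uv,1,z,t)$ denote the substitutions $v\mapsto1$ and $(u,v)\mapsto(uv,1)$. *)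

theory Defs
  imports Main "HOL-Computational_Algebra.Formal_Power_Series"
begin

text \<open>Sequences are 0-indexed lists of naturals: entry x_(i+1) of the paper is xs ! i.\<close>

definition asc :: "nat list \<Rightarrow> nat" where
  "asc xs = card {j. Suc j < length xs \<and> xs ! j < xs ! Suc j}"

definition ascent_seq :: "nat list \<Rightarrow> bool" where
  "ascent_seq xs \<longleftrightarrow> xs \<noteq> [] \<and> xs ! 0 = 0 \<and>
     (\<forall>i. 1 \<le> i \<and> i < length xs \<longrightarrow> xs ! i \<le> 1 + asc (take i xs))"

definition zeros :: "nat list \<Rightarrow> nat" where
  "zeros xs = length (filter (\<lambda>x. x = 0) xs)"

text \<open>Generating function H(u,v,z,t), with u v z elements of an arbitrary commutative ring
  (which subsumes the polynomial ring Z[u,v,z]); coefficient of t^n sums over ascent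
  sequences of length n (nonempty, so the constant coefficient is 0).\<close>

definition H :: "'a::comm_ring_1 \<Rightarrow> 'a \<Rightarrow> 'a \<Rightarrow> 'a fps" where
  "H u v z = Abs_fps (\<lambda>n. \<Sum>w\<in>{w. ascent_seq w \<and> length w = n}.
      u ^ asc w * v ^ last w * z ^ zeros w)"

end

theory Submission imports Defs begin

unbundle fps_syntax

text \<open>Every ascent sequence of length m + 1 \<ge> 2 arises uniquely by appending an entry
  x \<le> asc w + 1 to an ascent sequence w of length m; appending x adds an ascent iff
  last w < x and adds a zero iff x = 0. Since last w \<le> asc w, the sum over x of the new
  weights splits at x = last w into two geometric progressions in v, so after multiplying by
  v - 1 it telescopes to u^a z^k (z (v - 1) - v + (1 - u) v^(l+1) + u v^(a+2)), where a, l, k are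
  the ascents, last entry and zeros of w. The three terms are the weights of w in H(u,1,z,t),
  v (1 - u) H(u,v,z,t) and u v^2 H(uv,1,z,t), which gives the functional equation
  coefficientwise.\<close>

lemma asc_snoc:
  assumes "xs \<noteq> []"
  shows "asc (xs @ [x]) = asc xs + (if last xs < x then 1 else 0)"
proof -
  let ?A = "{j. Suc j < length xs \<and> xs ! j < xs ! Suc j}"
  have fin: "finite ?A" by (rule finite_subset[of _ "{..<length xs}"]) auto
  have snoc_ascents: "{j. Suc j < length (xs @ [x]) \<and> (xs @ [x]) ! j < (xs @ [x]) ! Suc j}
      = ?A \<union> (if last xs < x then {length xs - 1} else {})"
  proof (rule set_eqI)
    fix j
    show "j \<in> {j. Suc j < length (xs @ [x]) \<and> (xs @ [x]) ! j < (xs @ [x]) ! Suc j} \<longleftrightarrow>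
        j \<in> ?A \<union> (if last xs < x then {length xs - 1} else {})"
    proof (cases "Suc j < length xs")
      case True then show ?thesis by (auto simp: nth_append)
    next
      case False then show ?thesis
        using assms by (cases "j = length xs - 1") (auto simp: nth_append last_conv_nth)
    qed
  qed
  show ?thesis unfolding asc_def snoc_ascents using fin by (auto simp: card_insert_if)
qed

lemma ascent_seq_snoc_iff:
  assumes "xs \<noteq> []"
  shows "ascent_seq (xs @ [x]) \<longleftrightarrow> ascent_seq xs \<and> x \<le> 1 + asc xs"
proof
  assume a: "ascent_seq (xs @ [x])"
  have "xs ! i \<le> 1 + asc (take i xs)" if "1 \<le> i" "i < length xs" for i
    using a that unfolding ascent_seq_def
    by (metis (no_types, lifting) length_append_singleton less_SucI nth_append take_append
        take_eq_Nil2 append_Nil2 diff_is_0_eq' less_imp_le_nat)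
  moreover have "x \<le> 1 + asc xs"
    using a assms unfolding ascent_seq_def
    by (metis One_nat_def Suc_le_eq butlast_snoc length_append_singleton length_greater_0_conv
        lessI nth_append_length butlast_conv_take diff_Suc_1)
  ultimately show "ascent_seq xs \<and> x \<le> 1 + asc xs"
    using a assms by (simp add: ascent_seq_def nth_append)
next
  assume a: "ascent_seq xs \<and> x \<le> 1 + asc xs"
  show "ascent_seq (xs @ [x])" unfolding ascent_seq_def
  proof (intro conjI allI impI)
    show "(xs @ [x]) ! 0 = 0" using a assms by (simp add: ascent_seq_def nth_append)
    fix i assume i: "1 \<le> i \<and> i < length (xs @ [x])"
    show "(xs @ [x]) ! i \<le> 1 + asc (take i (xs @ [x]))"
    proof (cases "i < length xs")
      case True then show ?thesis using a i by (simp add: ascent_seq_def nth_append)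
    next
      case False
      then have "i = length xs" using i by simp
      then show ?thesis using a by simp
    qed
  qed simp
qed

lemma last_le_asc: "ascent_seq w \<Longrightarrow> last w \<le> asc w"
proof (induction w rule: rev_induct)
  case Nil then show ?case by (simp add: ascent_seq_def)
next
  case (snoc x xs)
  show ?case
  proof (cases "xs = []")
    case True then show ?thesis using snoc.prems by (simp add: ascent_seq_def)
  next
    case False
    then have "ascent_seq xs" "x \<le> 1 + asc xs" using snoc.prems ascent_seq_snoc_iff by blast+
    then show ?thesis using snoc.IH False by (simp add: asc_snoc)
  qed
qed

definition ascent_seqs :: "nat \<Rightarrow> nat list set" where
  "ascent_seqs n = {w. ascent_seq w \<and> length w = n}"

lemma ascent_seqs_0: "ascent_seqs 0 = {}"
  by (auto simp: ascent_seqs_def ascent_seq_def)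

lemma ascent_seqs_1: "ascent_seqs (Suc 0) = {[0]}"
  by (auto simp: ascent_seqs_def ascent_seq_def length_Suc_conv)

lemma ascent_seqs_Suc:
  assumes "m \<ge> 1"
  shows "ascent_seqs (Suc m) = (\<lambda>(w, x). w @ [x]) ` (SIGMA w:ascent_seqs m. {..Suc (asc w)})"
proof (rule set_eqI iffI)+
  fix w assume w: "w \<in> ascent_seqs (Suc m)"
  then have "butlast w \<noteq> []" using assms
    by (cases w rule: rev_cases) (auto simp: ascent_seqs_def)
  moreover have w_eq: "w = butlast w @ [last w]"
    using w by (auto simp: ascent_seqs_def ascent_seq_def)
  ultimately have "(butlast w, last w) \<in> (SIGMA w:ascent_seqs m. {..Suc (asc w)})"
    using w ascent_seq_snoc_iff[of "butlast w" "last w"] by (simp add: ascent_seqs_def)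
  then show "w \<in> (\<lambda>(w, x). w @ [x]) ` (SIGMA w:ascent_seqs m. {..Suc (asc w)})"
    using w_eq by force
next
  fix w assume "w \<in> (\<lambda>(w, x). w @ [x]) ` (SIGMA w:ascent_seqs m. {..Suc (asc w)})"
  then obtain xs x where w: "w = xs @ [x]" "xs \<in> ascent_seqs m" "x \<le> Suc (asc xs)" by auto
  then have "xs \<noteq> []" using assms by (auto simp: ascent_seqs_def)
  then show "w \<in> ascent_seqs (Suc m)"
    using w ascent_seq_snoc_iff[of xs x] by (simp add: ascent_seqs_def)
qed

lemma finite_ascent_seqs: "finite (ascent_seqs n)"
proof (induction n)
  case (Suc n) then show ?case
    by (cases "n = 0") (auto simp: ascent_seqs_1 ascent_seqs_Suc)
qed (simp add: ascent_seqs_0)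

lemma sum_ascent_seqs_Suc:
  assumes "m \<ge> 1"
  shows "(\<Sum>w\<in>ascent_seqs (Suc m). f w) = (\<Sum>w\<in>ascent_seqs m. \<Sum>x\<le>Suc (asc w). f (w @ [x]))"
proof -
  have inj: "inj_on (\<lambda>(w, x). w @ [x]) (SIGMA w:ascent_seqs m. {..Suc (asc w)})"
    by (auto simp: inj_on_def)
  have "(\<Sum>w\<in>ascent_seqs (Suc m). f w)
      = (\<Sum>(w, x)\<in>(SIGMA w:ascent_seqs m. {..Suc (asc w)}). f (w @ [x]))"
    unfolding ascent_seqs_Suc[OF assms] using sum.reindex[OF inj, of f]
    by (simp add: comp_def case_prod_beta)
  also have "\<dots> = (\<Sum>w\<in>ascent_seqs m. \<Sum>x\<le>Suc (asc w). f (w @ [x]))"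
    by (rule sum.Sigma[symmetric]) (simp_all add: finite_ascent_seqs)
  finally show ?thesis .
qed

definition asc_weight :: "'a::comm_ring_1 \<Rightarrow> 'a \<Rightarrow> 'a \<Rightarrow> nat list \<Rightarrow> 'a" where
  "asc_weight u v z w = u ^ asc w * v ^ last w * z ^ zeros w"

lemma H_nth: "H u v z $ n = (\<Sum>w\<in>ascent_seqs n. asc_weight u v z w)"
  by (simp add: H_def ascent_seqs_def asc_weight_def)

lemma asc_weight_snoc:
  assumes "w \<noteq> []"
  shows "asc_weight u v z (w @ [x]) =
    asc_weight u 1 z w * (u ^ (if last w < x then 1 else 0) * v ^ x * z ^ (if x = 0 then 1 else 0))"
  using assms by (simp add: asc_weight_def asc_snoc zeros_def power_add algebra_simps)

lemma sum_append_entry_weight: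
  fixes u v z :: "'a::comm_ring_1"
  assumes "l \<le> n"
  shows "(v - 1) * (\<Sum>x\<le>n. u ^ (if l < x then 1 else 0) * v ^ x * z ^ (if x = 0 then 1 else 0))
    = z * (v - 1) - v + (1 - u) * v ^ Suc l + u * v ^ Suc n"
proof -
  have low: "(v - 1) * (\<Sum>x\<le>l. v ^ x * z ^ (if x = 0 then 1 else 0)) = z * (v - 1) - v + v ^ Suc l"
    by (induction l) (simp_all add: algebra_simps)
  have high: "(v - 1) * (\<Sum>x=Suc l..n. v ^ x) = v ^ Suc n - v ^ Suc l"
    using assms by (induction n rule: dec_induct) (simp_all add: algebra_simps)
  have "{..n} = {..l} \<union> {Suc l..n}" using assms by auto
  then have "(\<Sum>x\<le>n. u ^ (if l < x then 1 else 0) * v ^ x * z ^ (if x = 0 then 1 else 0))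
      = (\<Sum>x\<le>l. v ^ x * z ^ (if x = 0 then 1 else 0)) + u * (\<Sum>x=Suc l..n. v ^ x)"
    by (simp add: sum.union_disjoint ivl_disj_int sum_distrib_left)
  then have "(v - 1) * (\<Sum>x\<le>n. u ^ (if l < x then 1 else 0) * v ^ x * z ^ (if x = 0 then 1 else 0))
      = (v - 1) * (\<Sum>x\<le>l. v ^ x * z ^ (if x = 0 then 1 else 0)) + u * ((v - 1) * (\<Sum>x=Suc l..n. v ^ x))"
    by (simp add: algebra_simps)
  also have "\<dots> = z * (v - 1) - v + v ^ Suc l + u * (v ^ Suc n - v ^ Suc l)"
    by (simp only: low high)
  finally show ?thesis by (simp add: algebra_simps)
qed

lemma sum_snoc_asc_weight:
  fixes u v z :: "'a::comm_ring_1"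
  assumes "ascent_seq w"
  shows "(v - 1) * (\<Sum>x\<le>Suc (asc w). asc_weight u v z (w @ [x]))
    = (z * (v - 1) - v) * asc_weight u 1 z w + v * (1 - u) * asc_weight u v z w
      + u * v ^ 2 * asc_weight (u * v) 1 z w"
proof -
  have "w \<noteq> []" using assms by (simp add: ascent_seq_def)
  then have "(v - 1) * (\<Sum>x\<le>Suc (asc w). asc_weight u v z (w @ [x])) = asc_weight u 1 z w *
      ((v - 1) * (\<Sum>x\<le>Suc (asc w).
        u ^ (if last w < x then 1 else 0) * v ^ x * z ^ (if x = 0 then 1 else 0)))"
    by (simp add: asc_weight_snoc sum_distrib_left[symmetric] mult.left_commute)
  also have "\<dots> = asc_weight u 1 z w *
      (z * (v - 1) - v + (1 - u) * v ^ Suc (last w) + u * v ^ Suc (Suc (asc w)))"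
    using last_le_asc[OF assms] by (subst sum_append_entry_weight) simp_all
  also have "\<dots> = (z * (v - 1) - v) * asc_weight u 1 z w + v * (1 - u) * asc_weight u v z w
      + u * v ^ 2 * asc_weight (u * v) 1 z w"
    by (simp add: asc_weight_def power_mult_distrib power2_eq_square algebra_simps)
  finally show ?thesis .
qed

lemma H_nth_Suc_recurrence:
  fixes u v z :: "'a::comm_ring_1"
  assumes "m \<ge> 1"
  shows "(v - 1) * H u v z $ Suc m = (z * (v - 1) - v) * H u 1 z $ m + v * (1 - u) * H u v z $ m
    + u * v ^ 2 * H (u * v) 1 z $ m"
proof -
  have "(v - 1) * H u v z $ Suc m
      = (\<Sum>w\<in>ascent_seqs m. (v - 1) * (\<Sum>x\<le>Suc (asc w). asc_weight u v z (w @ [x])))"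
    by (simp add: H_nth sum_ascent_seqs_Suc[OF assms] sum_distrib_left)
  also have "\<dots> = (\<Sum>w\<in>ascent_seqs m. (z * (v - 1) - v) * asc_weight u 1 z w
      + v * (1 - u) * asc_weight u v z w + u * v ^ 2 * asc_weight (u * v) 1 z w)"
    by (intro sum.cong refl sum_snoc_asc_weight) (simp add: ascent_seqs_def)
  finally show ?thesis by (simp add: H_nth sum.distrib sum_distrib_left)
qed

theorem lemma5:
  fixes u v z :: "'a::comm_ring_1"
  shows "(fps_const (v - 1) - fps_X * fps_const (v * (1 - u))) * H u v z =
    fps_X * fps_const (z * (v - 1))
    + fps_X * fps_const (z * (v - 1) - v) * H u 1 z
    + fps_X * fps_const (u * v ^ 2) * H (u * v) 1 z"
proof (rule fps_ext)
  fix n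
  consider "n = 0" | "n = 1" | m where "n = Suc m" "m \<ge> 1"
    by (metis One_nat_def less_one not_less not0_implies_Suc)
  then show "((fps_const (v - 1) - fps_X * fps_const (v * (1 - u))) * H u v z) $ n =
    (fps_X * fps_const (z * (v - 1)) + fps_X * fps_const (z * (v - 1) - v) * H u 1 z
      + fps_X * fps_const (u * v ^ 2) * H (u * v) 1 z) $ n"
  proof cases
    case 1 then show ?thesis by (simp add: H_nth ascent_seqs_0)
  next
    case 2 then show ?thesis
      by (simp add: H_nth ascent_seqs_0 ascent_seqs_1 asc_weight_def zeros_def asc_def
          fps_X_mult_nth mult.assoc algebra_simps)
  next
    case 3 then show ?thesis
      using H_nth_Suc_recurrence[OF 3(2), of v u z]
      by (simp add: mult.assoc fps_X_mult_nth algebra_simps)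
  qed
qed

end
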